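(* Let $q$ be a prime power, $1\le k\le n-1$, and let $\mathcal{L}$ be a Cameron-Liebler $k$-set of $\mathrm{AG}(n,q)$ with parameter $x$. Then for every $k$-spread $\mathcal{S}$ of $\mathrm{AG}(n,q)$ we have $|\mathcal{L}\cap\mathcal{S}|=x$.
   Context: $\mathrm{AG}(n,q)$ is $\mathrm{PG}(n,q)$ with a hyperplane $\pi_\infty$ removed; affine points are points outside $\pi_\infty$, affine $k$-spaces are $k$-dimensional projective subspaces not contained in $\pi_\infty$ (identified with their sets of affine points). A $k$-spread of $\mathrm{AG}(n,q)$ is a set of affine $k$-spaces that pairwise share no affine point and together cover all affine points. With $A_n$ the incidence matrix of affine points versus affine $k$-spaces, a set $\mathcal{L}$ of affine $k$-spaces is a Cameron-Liebler $k$-set of $\mathrm{AG}(n,q)$ if its characteristic vector lies in the real row space $\mathrm{Im}(A_n^T)$; its parameter is $x=|\mathcal{L}|/\left[{n\atop k}\right]_q$, where $\left[{a\atop b}\right]_q=\frac{(q^a-1)\cdots(q^{a-b+1}-1)}{(q^b-1)\cdots(q-1)}$. *)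

theory Defs
  imports "HOL-Analysis.Analysis"
begin

text \<open>AG(n,q) is modelled as the vector space F^n over a finite field F with q elements,
  where n = CARD('n). Affine points are the vectors; an affine k-space is (the point set of)
  a coset v + W of a k-dimensional linear subspace W.\<close>

definition affine_kspaces :: "nat \<Rightarrow> ('a::{finite,field} ^ 'n) set set" where
  "affine_kspaces k = {(\<lambda>w. v + w) ` W | v W. vec.subspace W \<and> vec.dim W = k}"

definition is_kspread :: "nat \<Rightarrow> ('a::{finite,field} ^ 'n) set set \<Rightarrow> bool" where
  "is_kspread k S \<longleftrightarrow> S \<subseteq> affine_kspaces k
     \<and> (\<forall>A\<in>S. \<forall>B\<in>S. A \<noteq> B \<longrightarrow> A \<inter> B = {})
     \<and> \<Union>S = UNIV"

text \<open>Cameron-Liebler k-set: the characteristic vector (indexed by affine k-spaces) lies in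
  the real row space of the point/k-space incidence matrix A_n, i.e. in Im(A_n^T): it is a
  real linear combination of the rows (one row per affine point p).\<close>
definition cameron_liebler_kset :: "nat \<Rightarrow> ('a::{finite,field} ^ 'n) set set \<Rightarrow> bool" where
  "cameron_liebler_kset k L \<longleftrightarrow> L \<subseteq> affine_kspaces k
     \<and> (\<exists>c :: 'a ^ 'n \<Rightarrow> real. \<forall>T\<in>affine_kspaces k.
          (if T \<in> L then 1 else 0) = (\<Sum>p\<in>UNIV. c p * (if p \<in> T then 1 else 0)))"

definition gauss_binom :: "nat \<Rightarrow> nat \<Rightarrow> real \<Rightarrow> real" where
  "gauss_binom a b q = (\<Prod>i<b. q ^ (a - i) - 1) / (\<Prod>i<b. q ^ (i + 1) - 1)"

definition cl_parameter :: "nat \<Rightarrow> ('a::{finite,field} ^ 'n) set set \<Rightarrow> real" where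
  "cl_parameter k L = real (card L) / gauss_binom CARD('n) k (real CARD('a))"

end

theory Submission
  imports Defs
begin

text \<open>Write \<open>c\<close> for the point weights exhibiting the characteristic vector of \<open>L\<close> as a
  combination of rows of the incidence matrix. Summing \<open>\<chi>\<^sub>L(T) = \<Sum>\<^sub>p c p [p \<in> T]\<close> over a
  family of \<open>k\<close>-spaces counts every point with the number of members of the family through it.
  Through every point of \<open>F\<^sup>n\<close> pass exactly \<open>[n k]\<^sub>q\<close> affine \<open>k\<close>-spaces (the translates of the
  \<open>k\<close>-dimensional subspaces), so summing over all of them gives \<open>|L| = [n k]\<^sub>q \<Sum>\<^sub>p c p\<close>; a
  \<open>k\<close>-spread covers every point exactly once, so summing over it gives \<open>|L \<inter> S| = \<Sum>\<^sub>p c p\<close>.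
  The number of \<open>k\<close>-dimensional subspaces is found by counting ordered independent \<open>k\<close>-tuples.\<close>

lemma card_span_independent:
  fixes B :: "('a::{finite,field} ^ 'n) set"
  assumes "vec.independent B"
  shows "card (vec.span B) = CARD('a) ^ card B"
proof -
  let ?comb = "\<lambda>u. \<Sum>v\<in>B. u v *s v"
  have "range ?comb = ?comb ` (B \<rightarrow>\<^sub>E UNIV)"
  proof (intro equalityI subsetI)
    fix y assume "y \<in> range ?comb"
    then obtain u where y: "y = ?comb u" by blast
    have "?comb u = ?comb (restrict u B)" by (rule sum.cong) auto
    then show "y \<in> ?comb ` (B \<rightarrow>\<^sub>E UNIV)"
      unfolding y by (intro rev_image_eqI[of "restrict u B"]) simp_all
  qed blast
  then have span_eq: "vec.span B = ?comb ` (B \<rightarrow>\<^sub>E UNIV)"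
    by (simp add: vec.span_finite)
  have "inj_on ?comb (B \<rightarrow>\<^sub>E UNIV)"
  proof (rule inj_onI)
    fix u u' assume u: "u \<in> B \<rightarrow>\<^sub>E UNIV" and u': "u' \<in> B \<rightarrow>\<^sub>E UNIV" and "?comb u = ?comb u'"
    have "(\<Sum>v\<in>B. (u v - u' v) *s v) = ?comb u - ?comb u'"
      by (simp add: vector_sub_rdistrib sum_subtractf)
    also have "\<dots> = 0" using \<open>?comb u = ?comb u'\<close> by simp
    finally have "\<forall>v\<in>B. u v - u' v = 0"
      by (rule conjunct2[OF assms[unfolded vec.independent_explicit], THEN spec, THEN mp])
    then show "u = u'" using PiE_ext[OF u u'] by simp
  qed
  then have "card (vec.span B) = card (B \<rightarrow>\<^sub>E (UNIV :: 'a set))"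
    unfolding span_eq by (rule card_image)
  also have "\<dots> = CARD('a) ^ card B" by (simp add: card_PiE)
  finally show ?thesis .
qed

lemma card_subspace:
  fixes U :: "('a::{finite,field} ^ 'n) set"
  assumes "vec.subspace U"
  shows "card U = CARD('a) ^ vec.dim U"
proof -
  obtain B where "B \<subseteq> U" "vec.independent B" "U \<subseteq> vec.span B" "card B = vec.dim U"
    by (rule vec.basis_exists)
  then show ?thesis
    using vec.span_subspace[OF _ _ assms] card_span_independent by metis
qed

definition independent_lists :: "('a::{finite,field} ^ 'n) set \<Rightarrow> nat \<Rightarrow> ('a ^ 'n) list set" where
  "independent_lists U j =
     {xs. length xs = j \<and> distinct xs \<and> set xs \<subseteq> U \<and> vec.independent (set xs)}"

lemma finite_independent_lists: "finite (independent_lists U j)"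
proof -
  have "independent_lists U j \<subseteq> {xs. set xs \<subseteq> UNIV \<and> length xs = j}"
    unfolding independent_lists_def by auto
  then show ?thesis
    using finite_lists_length_eq[OF finite_class.finite_UNIV, of j] by (rule finite_subset)
qed

lemma independent_lists_Suc:
  "independent_lists U (Suc j) =
     (\<lambda>(xs, x). x # xs) ` (SIGMA xs:independent_lists U j. U - vec.span (set xs))"
proof (intro equalityI subsetI)
  fix ys assume "ys \<in> independent_lists U (Suc j)"
  then obtain x xs where "ys = x # xs" "length xs = j" "distinct (x # xs)" "set (x # xs) \<subseteq> U"
      "vec.independent (set (x # xs))"
    unfolding independent_lists_def by (cases ys) auto
  moreover have "x \<notin> vec.span (set xs)" "vec.independent (set xs)"
    using calculation vec.independent_insert[of x "set xs"] by auto
  ultimately show "ys \<in> (\<lambda>(xs, x). x # xs) ` (SIGMA xs:independent_lists U j. U - vec.span (set xs))"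
    unfolding independent_lists_def by force
next
  fix ys assume "ys \<in> (\<lambda>(xs, x). x # xs) ` (SIGMA xs:independent_lists U j. U - vec.span (set xs))"
  then obtain x xs where "ys = x # xs" "xs \<in> independent_lists U j" "x \<in> U" "x \<notin> vec.span (set xs)"
    by auto
  moreover have "x \<notin> set xs" using calculation(4) vec.span_base by blast
  ultimately show "ys \<in> independent_lists U (Suc j)"
    using vec.independent_insert[of x "set xs"] unfolding independent_lists_def by auto
qed

lemma card_independent_lists:
  fixes U :: "('a::{finite,field} ^ 'n) set"
  assumes U: "vec.subspace U" and "j \<le> vec.dim U"
  shows "real (card (independent_lists U j)) =
    (\<Prod>i<j. real CARD('a) ^ vec.dim U - real CARD('a) ^ i)"
  using \<open>j \<le> vec.dim U\<close>
proof (induction j)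
  case 0
  have "independent_lists U 0 = {[]}"
    unfolding independent_lists_def by (auto simp: vec.independent_empty)
  then show ?case by simp
next
  case (Suc j)
  have extensions: "real (card (U - vec.span (set xs))) = real CARD('a) ^ vec.dim U - real CARD('a) ^ j"
    if "xs \<in> independent_lists U j" for xs
  proof -
    have "vec.span (set xs) \<subseteq> U"
      using that U unfolding independent_lists_def by (simp add: vec.span_minimal)
    moreover have "card (vec.span (set xs)) = CARD('a) ^ j"
      using that card_span_independent[of "set xs"] unfolding independent_lists_def
      by (simp add: distinct_card)
    ultimately show ?thesis
      using card_subspace[OF U] card_mono[of U "vec.span (set xs)"]
      by (simp add: card_Diff_subset of_nat_diff)
  qed
  have "inj_on (\<lambda>(xs, x). x # xs) (SIGMA xs:independent_lists U j. U - vec.span (set xs))"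
    by (auto simp: inj_on_def)
  then have "card (independent_lists U (Suc j)) =
      (\<Sum>xs\<in>independent_lists U j. card (U - vec.span (set xs)))"
    unfolding independent_lists_Suc
    by (simp add: card_image card_SigmaI finite_independent_lists)
  then have "real (card (independent_lists U (Suc j))) =
      real (card (independent_lists U j)) * (real CARD('a) ^ vec.dim U - real CARD('a) ^ j)"
    by (simp add: extensions)
  then show ?case using Suc by simp
qed

lemma span_independent_list:
  assumes "vec.subspace W" and "xs \<in> independent_lists W (vec.dim W)"
  shows "vec.span (set xs) = W"
proof -
  have "set xs \<subseteq> W" "card (set xs) = vec.dim W" "vec.independent (set xs)"
    using assms unfolding independent_lists_def by (auto simp: distinct_card)
  then show ?thesis
    using vec.card_eq_dim vec.span_subspace[OF _ _ assms(1)] by (metis List.finite_set)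
qed

lemma card_subspaces_double_count:
  assumes "k \<le> CARD('n)"
  shows "real (card {W :: ('a::{finite,field} ^ 'n) set. vec.subspace W \<and> vec.dim W = k})
      * (\<Prod>i<k. real CARD('a) ^ k - real CARD('a) ^ i)
    = (\<Prod>i<k. real CARD('a) ^ CARD('n) - real CARD('a) ^ i)"
proof -
  let ?Sub = "{W :: ('a ^ 'n) set. vec.subspace W \<and> vec.dim W = k}"
  let ?V = "UNIV :: ('a ^ 'n) set"
  have "independent_lists ?V k = (\<Union>W\<in>?Sub. independent_lists W k)"
  proof (intro equalityI subsetI)
    fix xs assume xs: "xs \<in> independent_lists ?V k"
    then have "vec.dim (vec.span (set xs)) = k"
      unfolding independent_lists_def by (simp add: vec.dim_eq_card_independent distinct_card)
    moreover have "xs \<in> independent_lists (vec.span (set xs)) k"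
      using xs vec.span_base unfolding independent_lists_def by auto
    ultimately show "xs \<in> (\<Union>W\<in>?Sub. independent_lists W k)"
      using vec.subspace_span by blast
  qed (auto simp: independent_lists_def)
  moreover have "independent_lists W k \<inter> independent_lists W' k = {}"
    if "W \<in> ?Sub" "W' \<in> ?Sub" "W \<noteq> W'" for W W'
    using that span_independent_list[of W] span_independent_list[of W'] by fastforce
  ultimately have "card (independent_lists ?V k) = (\<Sum>W\<in>?Sub. card (independent_lists W k))"
    using card_UN_disjoint[of ?Sub "\<lambda>W. independent_lists W k"]
    by (simp add: finite_independent_lists)
  then have "real (card (independent_lists ?V k)) =
      (\<Sum>W\<in>?Sub. \<Prod>i<k. real CARD('a) ^ k - real CARD('a) ^ i)"
    by (simp add: card_independent_lists)
  moreover have "real (card (independent_lists ?V k)) =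
      (\<Prod>i<k. real CARD('a) ^ CARD('n) - real CARD('a) ^ i)"
    using card_independent_lists[of ?V k] assms
    by (simp add: vec.subspace_UNIV vec.dim_UNIV card_cart_basis)
  ultimately show ?thesis by (simp add: mult.commute)
qed

lemma prod_power_diff_factor:
  fixes q :: "'a::comm_ring_1"
  assumes "k \<le> m"
  shows "(\<Prod>i<k. q ^ m - q ^ i) = (\<Prod>i<k. q ^ i) * (\<Prod>i<k. q ^ (m - i) - 1)"
proof -
  have "q ^ m - q ^ i = q ^ i * (q ^ (m - i) - 1)" if "i < k" for i
    using that assms by (simp add: algebra_simps flip: power_add)
  then show ?thesis by (simp add: prod.distrib[symmetric])
qed

lemma gauss_binom_eq_prod_ratio:
  fixes q :: real
  assumes "q \<noteq> 0" and "k \<le> n"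
  shows "gauss_binom n k q = (\<Prod>i<k. q ^ n - q ^ i) / (\<Prod>i<k. q ^ k - q ^ i)"
proof -
  let ?P = "\<Prod>i<k. q ^ i"
  have "(\<Prod>i<k. q ^ (k - i) - 1) = (\<Prod>i<k. (\<lambda>j. q ^ (j + 1) - 1) (k - Suc i))"
  proof (intro prod.cong refl)
    fix i assume "i \<in> {..<k}"
    then have "k - i = k - Suc i + 1" by simp
    then show "q ^ (k - i) - 1 = (\<lambda>j. q ^ (j + 1) - 1) (k - Suc i)" by (simp only:)
  qed
  also have "\<dots> = (\<Prod>i<k. q ^ (i + 1) - 1)" by (rule prod.nat_diff_reindex)
  finally have "(\<Prod>i<k. q ^ k - q ^ i) = ?P * (\<Prod>i<k. q ^ (i + 1) - 1)"
    using prod_power_diff_factor[of k k q] by simp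
  moreover have "(\<Prod>i<k. q ^ n - q ^ i) = ?P * (\<Prod>i<k. q ^ (n - i) - 1)"
    using assms(2) by (rule prod_power_diff_factor)
  moreover have "?P \<noteq> 0" using assms(1) by simp
  ultimately show ?thesis
    unfolding gauss_binom_def by (simp only: nonzero_mult_divide_mult_cancel_left[OF \<open>?P \<noteq> 0\<close>])
qed

lemma two_le_card_field: "2 \<le> CARD('a::{finite,field})"
proof -
  have "card {0::'a, 1} = 2" by simp
  then show ?thesis using card_mono[of UNIV "{0::'a, 1}"] by simp
qed

lemma card_subspaces_eq_gauss_binom:
  assumes "k \<le> CARD('n)"
  shows "real (card {W :: ('a::{finite,field} ^ 'n) set. vec.subspace W \<and> vec.dim W = k})
    = gauss_binom CARD('n) k (real CARD('a))"
proof -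
  let ?q = "real CARD('a)"
  have "?q > 1" using two_le_card_field[where 'a='a] by simp
  then have "(\<Prod>i<k. ?q ^ k - ?q ^ i) > 0"
    by (intro prod_pos) (simp add: power_strict_increasing)
  then have "(\<Prod>i<k. ?q ^ k - ?q ^ i) \<noteq> 0" by linarith
  then have "real (card {W :: ('a ^ 'n) set. vec.subspace W \<and> vec.dim W = k})
      = (\<Prod>i<k. ?q ^ CARD('n) - ?q ^ i) / (\<Prod>i<k. ?q ^ k - ?q ^ i)"
    using card_subspaces_double_count[OF assms] by (rule eq_divide_imp)
  also have "\<dots> = gauss_binom CARD('n) k ?q"
    using \<open>?q > 1\<close> assms by (simp add: gauss_binom_eq_prod_ratio)
  finally show ?thesis .
qed

lemma gauss_binom_pos:
  fixes q :: real
  assumes "1 < q" and "k \<le> n"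
  shows "0 < gauss_binom n k q"
proof -
  have "1 < q ^ (n - i)" if "i < k" for i
    using that assms by (simp add: one_less_power)
  moreover have "1 < q ^ (i + 1)" for i
    using assms(1) by (rule one_less_power) simp
  ultimately show ?thesis
    unfolding gauss_binom_def by (intro divide_pos_pos prod_pos) simp_all
qed

lemma translate_subspace_through_member:
  fixes W :: "('a::{finite,field} ^ 'n) set"
  assumes W: "vec.subspace W" and "p \<in> (\<lambda>w. v + w) ` W"
  shows "(\<lambda>w. v + w) ` W = (\<lambda>w. p + w) ` W"
proof -
  obtain w0 where w0: "w0 \<in> W" "p = v + w0" using assms(2) by blast
  show ?thesis
  proof (intro equalityI subsetI)
    fix x assume "x \<in> (\<lambda>w. v + w) ` W"
    then obtain w where "w \<in> W" "x = v + w" by blast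
    then have "w - w0 \<in> W" "x = p + (w - w0)"
      using w0 vec.subspace_diff[OF W] by (simp_all add: algebra_simps)
    then show "x \<in> (\<lambda>w. p + w) ` W" by blast
  next
    fix x assume "x \<in> (\<lambda>w. p + w) ` W"
    then obtain w where "w \<in> W" "x = p + w" by blast
    then have "w0 + w \<in> W" "x = v + (w0 + w)"
      using w0 vec.subspace_add[OF W] by (simp_all add: algebra_simps)
    then show "x \<in> (\<lambda>w. v + w) ` W" by blast
  qed
qed

lemma card_affine_kspaces_containing:
  fixes p :: "'a::{finite,field} ^ 'n"
  shows "card {T \<in> affine_kspaces k. p \<in> T} =
    card {W :: ('a ^ 'n) set. vec.subspace W \<and> vec.dim W = k}"
proof -
  have "bij_betw (\<lambda>W. (\<lambda>w. p + w) ` W)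
      {W. vec.subspace W \<and> vec.dim W = k} {T \<in> affine_kspaces k. p \<in> T}"
  proof (rule bij_betwI')
    show "((\<lambda>w. p + w) ` W = (\<lambda>w. p + w) ` W') = (W = W')" for W W' :: "('a ^ 'n) set"
      by (simp add: inj_image_eq_iff)
  next
    fix W :: "('a ^ 'n) set" assume "W \<in> {W. vec.subspace W \<and> vec.dim W = k}"
    moreover have "p = p + 0" by simp
    ultimately show "(\<lambda>w. p + w) ` W \<in> {T \<in> affine_kspaces k. p \<in> T}"
      unfolding affine_kspaces_def using vec.subspace_0 by blast
  next
    fix T assume "T \<in> {T \<in> affine_kspaces k. p \<in> T}"
    then show "\<exists>W\<in>{W. vec.subspace W \<and> vec.dim W = k}. T = (\<lambda>w. p + w) ` W"
      unfolding affine_kspaces_def using translate_subspace_through_member by blast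
  qed
  then show ?thesis by (rule bij_betw_same_card[symmetric])
qed

lemma card_inter_eq_weighted_incidences:
  fixes c :: "'p::finite \<Rightarrow> real" and A :: "'p set set"
  assumes "finite A"
    and "\<And>T. T \<in> A \<Longrightarrow> (if T \<in> L then 1 else 0) = (\<Sum>p\<in>UNIV. c p * (if p \<in> T then 1 else 0))"
  shows "real (card (L \<inter> A)) = (\<Sum>p\<in>UNIV. c p * real (card {T \<in> A. p \<in> T}))"
proof -
  have "real (card (L \<inter> A)) = (\<Sum>T\<in>A. if T \<in> L then 1 else 0)"
    using assms(1) by (simp add: sum.If_cases Int_commute)
  also have "\<dots> = (\<Sum>T\<in>A. \<Sum>p\<in>UNIV. c p * (if p \<in> T then 1 else 0))"
    using assms(2) by (rule sum.cong[OF refl])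
  also have "\<dots> = (\<Sum>p\<in>UNIV. c p * (\<Sum>T\<in>A. if p \<in> T then 1 else 0))"
    by (simp add: sum.swap[of _ A] sum_distrib_left)
  also have "\<dots> = (\<Sum>p\<in>UNIV. c p * real (card {T \<in> A. p \<in> T}))"
    using assms(1) by (simp add: sum.If_cases Collect_conj_eq Int_commute)
  finally show ?thesis .
qed

lemma is_kspread_card_containing:
  assumes "is_kspread k S"
  shows "card {T \<in> S. p \<in> T} = 1"
proof -
  have cover: "\<Union>S = UNIV"
    and disjoint: "\<And>A B. A \<in> S \<Longrightarrow> B \<in> S \<Longrightarrow> A \<noteq> B \<Longrightarrow> A \<inter> B = {}"
    using assms unfolding is_kspread_def by blast+
  obtain T0 where T0: "T0 \<in> S" "p \<in> T0"
    using cover by (metis UNIV_I UnionE)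
  have "{T \<in> S. p \<in> T} = {T0}"
  proof (intro equalityI subsetI)
    fix T assume "T \<in> {T \<in> S. p \<in> T}"
    then have "T = T0" using disjoint[of T T0] T0 by blast
    then show "T \<in> {T0}" by simp
  qed (use T0 in simp)
  then show ?thesis by simp
qed

theorem lemma3p2:
  fixes L S :: "('a::{finite,field} ^ 'n) set set" and k :: nat
  assumes "1 \<le> k" and "k \<le> CARD('n) - 1"
    and "cameron_liebler_kset k L"
    and "is_kspread k S"
  shows "real (card (L \<inter> S)) = cl_parameter k L"
proof -
  have k: "k \<le> CARD('n)" using assms(2) by simp
  obtain c :: "'a ^ 'n \<Rightarrow> real" where L: "L \<subseteq> affine_kspaces k" and
    c: "\<And>T. T \<in> affine_kspaces k \<Longrightarrow>
      (if T \<in> L then 1 else 0) = (\<Sum>p\<in>UNIV. c p * (if p \<in> T then 1 else 0))"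
    using assms(3) unfolding cameron_liebler_kset_def by blast
  have S: "S \<subseteq> affine_kspaces k" using assms(4) unfolding is_kspread_def by blast
  have "real (card L) = (\<Sum>p\<in>UNIV. c p) * gauss_binom CARD('n) k (real CARD('a))"
    using card_inter_eq_weighted_incidences[of "affine_kspaces k" L c] c L
    by (simp add: Int_absorb2 card_affine_kspaces_containing card_subspaces_eq_gauss_binom[OF k]
        sum_distrib_right)
  moreover have "real (card (L \<inter> S)) = (\<Sum>p\<in>UNIV. c p)"
    using card_inter_eq_weighted_incidences[of S L c] c S
    by (simp add: is_kspread_card_containing[OF assms(4)] subset_iff)
  moreover have "0 < gauss_binom CARD('n) k (real CARD('a))"
    using two_le_card_field[where 'a='a] k by (intro gauss_binom_pos) simp_all
  ultimately show ?thesis unfolding cl_parameter_def by simp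
qed

end
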